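(* Let $p,q$ be positive integers, $n=p+q$, and let $M$ be an $n\times n$ complex matrix with $M=M^*$ and $M^*I_{p,q}M=I_{p,q}$. If $\lambda\neq 0$ is an eigenvalue of $M+I_{p,q}$, then $|\lambda|\geq 2$.
   Context: $I_{p,q}=\mathrm{diag}\{I_p,-I_q\}$, where $I_p$ is the $p\times p$ identity matrix; $M^*$ denotes the conjugate transpose. *)

theory Defs
  imports "Jordan_Normal_Form.Schur_Decomposition"
begin

definition Ipq :: "nat \<Rightarrow> nat \<Rightarrow> complex mat" where
  "Ipq p q = mat (p + q) (p + q) (\<lambda>(i, j). if i = j then (if i < p then 1 else -1) else 0)"

end

theory Submission
  imports Defs
begin

text \<open>Write \<open>J = I\<^sub>p\<^sub>,\<^sub>q\<close> and let \<open>(M + J) v = \<lambda> v\<close> with \<open>v \<noteq> 0\<close>, \<open>\<lambda> \<noteq> 0\<close>. Since \<open>J\<^sup>2 = 1\<close> and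
  \<open>M J M = J\<close>, the matrix \<open>M J\<close> fixes \<open>M + J\<close> from the left, so \<open>M (J v) = v\<close>. Pairing the
  eigenvalue equation with \<open>J v\<close> and using that \<open>M\<close> is Hermitian and \<open>J\<close> unitary gives
  \<open>\<lambda> \<langle>v, J v\<rangle> = 2 \<langle>v, v\<rangle>\<close>; as \<open>|\<langle>v, J v\<rangle>| \<le> \<langle>v, v\<rangle>\<close>, this forces \<open>|\<lambda>| \<ge> 2\<close>.\<close>

lemma
  shows dim_row_mat_adjoint [simp]: "dim_row (mat_adjoint A) = dim_col A"
    and dim_col_mat_adjoint [simp]: "dim_col (mat_adjoint A) = dim_row A"
  by (simp_all add: mat_adjoint_def)

lemma index_mat_adjoint [simp]:
  "i < dim_col A \<Longrightarrow> j < dim_row A \<Longrightarrow> mat_adjoint A $$ (i, j) = conjugate (A $$ (j, i))"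
  by (simp add: mat_adjoint_def mat_of_rows_def)

lemma mult_mat_vec_cscalar_prod:
  fixes A :: "'a :: conjugatable_field mat"
  assumes A: "A \<in> carrier_mat nr nc" and v: "v \<in> carrier_vec nc" and w: "w \<in> carrier_vec nr"
  shows "(A *\<^sub>v v) \<bullet>c w = v \<bullet>c (mat_adjoint A *\<^sub>v w)"
proof -
  have "transpose_mat A *\<^sub>v conjugate w = conjugate (mat_adjoint A *\<^sub>v w)"
  proof (rule eq_vecI)
    fix j assume "j < dim_vec (conjugate (mat_adjoint A *\<^sub>v w))"
    then have j: "j < nc" using A by simp
    have "conjugate (conjugate (col A j) \<bullet> w) = col A j \<bullet>c w"
      using A w j by (intro conjugate_conjugate_sprod[of _ nr]) auto
    then show "(transpose_mat A *\<^sub>v conjugate w) $ j = conjugate (mat_adjoint A *\<^sub>v w) $ j"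
      using A j by (simp add: mat_adjoint_def)
  qed (use A in simp)
  moreover have "(A *\<^sub>v v) \<bullet>c w = (transpose_mat A *\<^sub>v conjugate w) \<bullet> v"
    using A v w by (simp add: transpose_vec_mult_scalar comm_scalar_prod[of _ nr])
  moreover have "conjugate (mat_adjoint A *\<^sub>v w) \<in> carrier_vec nc"
    using A by (simp add: carrier_vecI)
  ultimately show ?thesis
    using v by (simp add: comm_scalar_prod[of _ nc])
qed

lemma eigenvector_fixed_by_mult:
  fixes M J :: "'a :: field mat"
  assumes M: "M \<in> carrier_mat n n" and J: "J \<in> carrier_mat n n"
    and JJ: "J * J = 1\<^sub>m n" and MJM: "M * J * M = J"
    and v: "v \<in> carrier_vec n" and eig: "(M + J) *\<^sub>v v = l \<cdot>\<^sub>v v" and "l \<noteq> 0"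
  shows "M *\<^sub>v (J *\<^sub>v v) = v"
proof -
  have "M * J * (M + J) = M + J"
  proof -
    have "M * J * (M + J) = M * J * M + M * (J * J)"
      using M J by (simp add: mult_add_distrib_mat[of _ n n] assoc_mult_mat[of _ n n])
    then show ?thesis
      using M J by (simp add: MJM JJ comm_add_mat)
  qed
  moreover have "(M * J * (M + J)) *\<^sub>v v = M *\<^sub>v (J *\<^sub>v ((M + J) *\<^sub>v v))"
  proof -
    have "(M + J) *\<^sub>v v \<in> carrier_vec n"
      using M J v by (intro mult_mat_vec_carrier[of _ n n]) auto
    then show ?thesis
      using M J v by (simp add: assoc_mult_mat_vec[of _ n n _ n])
  qed
  ultimately have "M *\<^sub>v (J *\<^sub>v ((M + J) *\<^sub>v v)) = (M + J) *\<^sub>v v"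
    by simp
  then have "l \<cdot>\<^sub>v (M *\<^sub>v (J *\<^sub>v v)) = l \<cdot>\<^sub>v v"
    using M J v by (simp add: eig mult_mat_vec)
  then have "inverse l \<cdot>\<^sub>v (l \<cdot>\<^sub>v (M *\<^sub>v (J *\<^sub>v v))) = inverse l \<cdot>\<^sub>v (l \<cdot>\<^sub>v v)"
    by simp
  then show ?thesis
    using \<open>l \<noteq> 0\<close> by (simp add: smult_smult_assoc)
qed

lemma eigenvalue_cscalar_prod_identity:
  fixes M J :: "'a :: conjugatable_field mat"
  assumes M: "M \<in> carrier_mat n n" and J: "J \<in> carrier_mat n n"
    and M_herm: "mat_adjoint M = M" and J_herm: "mat_adjoint J = J"
    and JJ: "J * J = 1\<^sub>m n" and MJM: "M * J * M = J"
    and v: "v \<in> carrier_vec n" and eig: "(M + J) *\<^sub>v v = l \<cdot>\<^sub>v v" and "l \<noteq> 0"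
  shows "l * (v \<bullet>c (J *\<^sub>v v)) = 2 * (v \<bullet>c v)"
proof -
  define w where "w = J *\<^sub>v v"
  have w: "w \<in> carrier_vec n" and Mv: "M *\<^sub>v v \<in> carrier_vec n"
    using M J v by (simp_all add: w_def)
  have "(M *\<^sub>v v) \<bullet>c w = v \<bullet>c v"
    using mult_mat_vec_cscalar_prod[OF M v w] eigenvector_fixed_by_mult[OF M J JJ MJM v eig \<open>l \<noteq> 0\<close>]
    by (simp add: M_herm w_def)
  moreover have "w \<bullet>c w = v \<bullet>c v"
    using mult_mat_vec_cscalar_prod[OF J v w] J v
    by (simp add: J_herm w_def assoc_mult_mat_vec[symmetric, of _ n n _ n] JJ)
  moreover have "l * (v \<bullet>c w) = (M *\<^sub>v v) \<bullet>c w + w \<bullet>c w"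
  proof -
    have "l * (v \<bullet>c w) = ((M + J) *\<^sub>v v) \<bullet>c w"
      using v w by (simp add: eig)
    also have "\<dots> = (M *\<^sub>v v + w) \<bullet>c w"
      using M J v by (simp add: add_mult_distrib_mat_vec[of _ n n] w_def)
    also have "\<dots> = (M *\<^sub>v v) \<bullet>c w + w \<bullet>c w"
      using w Mv by (simp add: add_scalar_prod_distrib[of _ n])
    finally show ?thesis .
  qed
  ultimately show ?thesis
    by (simp add: w_def)
qed

lemma Ipq_carrier [simp]: "Ipq p q \<in> carrier_mat (p + q) (p + q)"
  unfolding Ipq_def by auto

lemma mat_adjoint_Ipq: "mat_adjoint (Ipq p q) = Ipq p q"
  by (rule eq_matI) (auto simp: Ipq_def)

lemma Ipq_mult_Ipq: "Ipq p q * Ipq p q = 1\<^sub>m (p + q)"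
proof (rule eq_matI)
  fix i j assume i: "i < dim_row (1\<^sub>m (p + q) :: complex mat)"
    and j: "j < dim_col (1\<^sub>m (p + q) :: complex mat)"
  have "(Ipq p q * Ipq p q) $$ (i, j) = (\<Sum>k<p + q. Ipq p q $$ (i, k) * Ipq p q $$ (k, j))"
    using i j by (simp add: Ipq_def scalar_prod_def atLeast0LessThan)
  also have "\<dots> = (\<Sum>k\<in>{i}. Ipq p q $$ (i, k) * Ipq p q $$ (k, j))"
    using i j by (intro sum.mono_neutral_right) (auto simp: Ipq_def)
  finally show "(Ipq p q * Ipq p q) $$ (i, j) = 1\<^sub>m (p + q) $$ (i, j)"
    using i j by (auto simp: Ipq_def)
qed (simp_all add: Ipq_def)

lemma Ipq_mult_vec_index:
  assumes "v \<in> carrier_vec (p + q)" and "i < p + q"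
  shows "(Ipq p q *\<^sub>v v) $ i = (if i < p then v $ i else - v $ i)"
proof -
  have "(Ipq p q *\<^sub>v v) $ i = (\<Sum>k<p + q. Ipq p q $$ (i, k) * v $ k)"
    using assms by (simp add: Ipq_def scalar_prod_def atLeast0LessThan)
  also have "\<dots> = (\<Sum>k\<in>{i}. Ipq p q $$ (i, k) * v $ k)"
    using assms by (intro sum.mono_neutral_right) (auto simp: Ipq_def)
  finally show ?thesis using assms by (auto simp: Ipq_def)
qed

lemma cmod_cscalar_prod_self:
  fixes v :: "complex vec"
  shows "cmod (v \<bullet>c v) = (\<Sum>i<dim_vec v. (cmod (v $ i))\<^sup>2)"
proof -
  have "v \<bullet>c v = of_real (\<Sum>i<dim_vec v. (cmod (v $ i))\<^sup>2)"
    by (simp add: scalar_prod_def atLeast0LessThan complex_norm_square[symmetric])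
  then show ?thesis
    by (simp add: sum_nonneg del: of_real_sum of_real_power)
qed

lemma cmod_cscalar_prod_Ipq_le:
  assumes v: "v \<in> carrier_vec (p + q)"
  shows "cmod (v \<bullet>c (Ipq p q *\<^sub>v v)) \<le> cmod (v \<bullet>c v)"
proof -
  define w where "w = Ipq p q *\<^sub>v v"
  have "w \<in> carrier_vec (p + q)"
    unfolding w_def using Ipq_carrier v by (rule mult_mat_vec_carrier)
  then have "cmod (v \<bullet>c w) \<le> (\<Sum>i<p + q. cmod (v $ i * cnj (w $ i)))"
    by (simp add: scalar_prod_def atLeast0LessThan norm_sum)
  also have "\<dots> = (\<Sum>i<p + q. (cmod (v $ i))\<^sup>2)"
    using v by (intro sum.cong) (simp_all add: w_def Ipq_mult_vec_index norm_mult power2_eq_square)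
  also have "\<dots> = cmod (v \<bullet>c v)"
    using v by (simp add: cmod_cscalar_prod_self)
  finally show ?thesis unfolding w_def .
qed

theorem corollary3p5:
  fixes p q n :: nat and M :: "complex mat" and l :: complex
  assumes "p > 0" and "q > 0" and "n = p + q"
    and "M \<in> carrier_mat n n"
    and "mat_adjoint M = M"
    and "mat_adjoint M * Ipq p q * M = Ipq p q"
    and "l \<noteq> 0"
    and "eigenvalue (M + Ipq p q) l"
  shows "cmod l \<ge> 2"
proof -
  let ?J = "Ipq p q"
  have M: "M \<in> carrier_mat n n" and J: "?J \<in> carrier_mat n n"
    using assms(3,4) by simp_all
  obtain v where v: "v \<in> carrier_vec n" and "v \<noteq> 0\<^sub>v n" and eig: "(M + ?J) *\<^sub>v v = l \<cdot>\<^sub>v v"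
    using assms(8) J unfolding eigenvalue_def eigenvector_def by auto
  have "l * (v \<bullet>c (?J *\<^sub>v v)) = 2 * (v \<bullet>c v)"
    using assms(3,5,6) Ipq_mult_Ipq
    by (intro eigenvalue_cscalar_prod_identity[OF M J _ mat_adjoint_Ipq _ _ v eig \<open>l \<noteq> 0\<close>]) simp_all
  then have "cmod l * cmod (v \<bullet>c (?J *\<^sub>v v)) = 2 * cmod (v \<bullet>c v)"
    by (metis norm_mult norm_numeral)
  moreover have "cmod (v \<bullet>c (?J *\<^sub>v v)) \<le> cmod (v \<bullet>c v)"
    using v assms(3) by (simp add: cmod_cscalar_prod_Ipq_le)
  moreover have "cmod (v \<bullet>c v) > 0"
    using v \<open>v \<noteq> 0\<^sub>v n\<close> by simp
  ultimately show ?thesis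
    by (metis mult_left_mono mult_right_le_imp_le norm_ge_zero)
qed

end
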